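(* Let $G=\langle c,q\mid c(qcq^{-1})=(qcq^{-1})c\rangle$. Then \[C_G(qcq^{-1})=\langle c,\ qcq^{-1},\ q^2cq^{-2}\rangle.\]
   Context: $C_G(g)=\{h\in G\mid gh=hg\}$ denotes the centraliser of $g$ in $G$. *)

theory Defs
  imports "HOL-Algebra.Algebra"
begin

text \<open>The group G = < c, q | c (q c q^-1) = (q c q^-1) c > is constructed as a
quotient of the monoid of words in the letters c, q and their formal inverses
by the congruence generated by free cancellation and the relator
[c, q c q^-1] = c q c q^-1 c^-1 q c^-1 q^-1.\<close>

datatype gen = Gc | Gq

type_synonym letter = "gen \<times> bool"  (* True = formal inverse *)

fun inv_letter :: "letter \<Rightarrow> letter" where
  "inv_letter (x, b) = (x, \<not> b)"

definition relator :: "letter list" where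
  "relator = [(Gc,False),(Gq,False),(Gc,False),(Gq,True),
              (Gc,True),(Gq,False),(Gc,True),(Gq,True)]"

inductive pres_eq :: "letter list \<Rightarrow> letter list \<Rightarrow> bool" where
  pres_refl: "pres_eq w w"
| pres_sym: "pres_eq u v \<Longrightarrow> pres_eq v u"
| pres_trans: "pres_eq u v \<Longrightarrow> pres_eq v w \<Longrightarrow> pres_eq u w"
| pres_cancel: "pres_eq (u @ [x, inv_letter x] @ v) (u @ v)"
| pres_rel: "pres_eq (u @ relator @ v) (u @ v)"

definition word_class :: "letter list \<Rightarrow> letter list set" where
  "word_class w = {v. pres_eq w v}"

definition G :: "letter list set monoid" where
  "G = \<lparr> carrier = word_class ` UNIV,
         monoid.mult = (\<lambda>A B. {w. \<exists>a\<in>A. \<exists>b\<in>B. pres_eq (a @ b) w}),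
         one = word_class [] \<rparr>"

definition c_el :: "letter list set" where
  "c_el = word_class [(Gc, False)]"

definition q_el :: "letter list set" where
  "q_el = word_class [(Gq, False)]"

definition centraliser :: "('a, 'b) monoid_scheme \<Rightarrow> 'a \<Rightarrow> 'a set" where
  "centraliser H g = {h \<in> carrier H. g \<otimes>\<^bsub>H\<^esub> h = h \<otimes>\<^bsub>H\<^esub> g}"

end

theory Submission
  imports Defs
begin

text \<open>G is the HNN extension of the free abelian group on c and c1 = q c q^-1 with stable
letter q conjugating c to c1. Left multiplication by the letters defines an action of G on reduced
normal forms (van der Waerden's trick); evaluating the normal form reached from the trivial one
recovers the element, so every h has a normal form nf(h) with nf(g h) = g . nf(h). Right
multiplication by c1 only changes the final c^a c1^b part of a normal form, so h commutes with c1
iff c1 . nf(h) = nf(h) c1, and peeling syllables off such a normal form writes h as a product of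
powers of c, c1 and c2 = q c1 q^-1. Conversely, c commutes with c1 by the relator, and hence c1
commutes with c2 after conjugating by q.\<close>

lemma (in group) commute_if_commutator_eq_one:
  assumes "a \<in> carrier G" "b \<in> carrier G" "a \<otimes> b \<otimes> inv a \<otimes> inv b = \<one>"
  shows "a \<otimes> b = b \<otimes> a"
proof -
  have "a \<otimes> b \<otimes> inv a \<otimes> inv b \<otimes> b \<otimes> a = b \<otimes> a" using assms by simp
  then show ?thesis using assms by (simp add: m_assoc)
qed

lemma (in group) conj_hom:
  assumes "g \<in> carrier G"
  shows "(\<lambda>x. g \<otimes> x \<otimes> inv g) \<in> hom G G"
proof -
  have cancel: "\<And>z. z \<in> carrier G \<Longrightarrow> inv g \<otimes> (g \<otimes> z) = z"
    using assms by (simp flip: m_assoc)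
  show ?thesis using assms by (intro homI) (auto simp: m_assoc cancel)
qed

lemma (in group) conj_mult:
  assumes "g \<in> carrier G" "a \<in> carrier G" "b \<in> carrier G"
  shows "g \<otimes> (a \<otimes> b) \<otimes> inv g = (g \<otimes> a \<otimes> inv g) \<otimes> (g \<otimes> b \<otimes> inv g)"
  using hom_mult[OF conj_hom[OF assms(1)] assms(2,3)] .

lemma (in group) conj_int_pow:
  assumes "g \<in> carrier G" "a \<in> carrier G"
  shows "g \<otimes> a [^] (k::int) \<otimes> inv g = (g \<otimes> a \<otimes> inv g) [^] k"
  using hom_int_pow[OF conj_hom[OF assms(1)] assms(2) is_group is_group] by simp

lemma (in group) commute_int_pow:
  assumes "a \<in> carrier G" "b \<in> carrier G" "a \<otimes> b = b \<otimes> a"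
  shows "a \<otimes> b [^] (j::int) = b [^] j \<otimes> a"
proof -
  have "a \<otimes> b \<otimes> inv a = b" using assms by (simp add: m_assoc)
  then have "a \<otimes> b [^] j \<otimes> inv a = b [^] j" using conj_int_pow[OF assms(1,2)] by simp
  then show ?thesis using assms by (metis inv_solve_right int_pow_closed m_closed inv_closed)
qed

lemma (in group) int_pow_commute:
  assumes "a \<in> carrier G" "b \<in> carrier G" "a \<otimes> b = b \<otimes> a"
  shows "a [^] (i::int) \<otimes> b [^] (j::int) = b [^] j \<otimes> a [^] i"
  using commute_int_pow[OF int_pow_closed[OF assms(2)] assms(1), of j i] commute_int_pow[OF assms]
  by simp

lemma (in group) subgroup_centraliser:
  assumes "g \<in> carrier G"
  shows "subgroup (centraliser G g) G"
proof (rule subgroupI)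
  fix h assume "h \<in> centraliser G g"
  then show "inv h \<in> centraliser G g"
    using assms commute_int_pow[of g h "-1"] by (simp add: centraliser_def int_pow_neg)
next
  fix h k assume "h \<in> centraliser G g" "k \<in> centraliser G g"
  then show "h \<otimes> k \<in> centraliser G g"
    using assms by (simp add: centraliser_def flip: m_assoc) (simp add: m_assoc)
qed (use assms in \<open>auto simp: centraliser_def intro!: exI[of _ "\<one>"]\<close>)

section \<open>The group as a quotient of the word monoid\<close>

lemma pres_eq_context: "pres_eq u v \<Longrightarrow> pres_eq (a @ u @ b) (a @ v @ b)"
proof (induction rule: pres_eq.induct)
  case (pres_cancel u x v)
  from pres_eq.pres_cancel[of "a @ u" x "v @ b"] show ?case by simp
next
  case (pres_rel u v)
  from pres_eq.pres_rel[of "a @ u" "v @ b"] show ?case by simp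
qed (blast intro: pres_eq.intros)+

lemma pres_eq_append: "pres_eq u u' \<Longrightarrow> pres_eq v v' \<Longrightarrow> pres_eq (u @ v) (u' @ v')"
  using pres_eq_context[of u u' "[]" v] pres_eq_context[of v v' u' "[]"]
  by (auto intro: pres_trans)

lemma word_class_eq_iff: "word_class u = word_class v \<longleftrightarrow> pres_eq u v"
  unfolding word_class_def by (auto intro: pres_eq.intros)

lemma carrier_G: "carrier G = range word_class"
  by (simp add: G_def)

lemma one_G: "\<one>\<^bsub>G\<^esub> = word_class []"
  by (simp add: G_def)

lemma word_class_mult: "word_class u \<otimes>\<^bsub>G\<^esub> word_class v = word_class (u @ v)"
  unfolding G_def word_class_def by (auto intro: pres_eq.intros pres_eq_append)

definition inv_word :: "letter list \<Rightarrow> letter list" where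
  "inv_word w = rev (map inv_letter w)"

lemma pres_eq_inv_word_append: "pres_eq (inv_word w @ w) []"
proof (induction w)
  case (Cons x w)
  have "pres_eq (inv_word w @ [inv_letter x, x] @ w) (inv_word w @ w)"
    using pres_cancel[of "inv_word w" "inv_letter x" w] by (cases x) simp
  with Cons show ?case by (auto simp: inv_word_def intro: pres_trans)
qed (simp add: inv_word_def pres_refl)

lemma group_G: "group G"
proof (rule groupI)
  fix x assume "x \<in> carrier G"
  then obtain w where "x = word_class w" by (auto simp: carrier_G)
  then show "\<exists>y\<in>carrier G. y \<otimes>\<^bsub>G\<^esub> x = \<one>\<^bsub>G\<^esub>"
    using pres_eq_inv_word_append[of w]
    by (auto simp: carrier_G word_class_mult one_G word_class_eq_iff)
qed (auto simp: carrier_G word_class_mult one_G)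

interpretation G: group G
  by (rule group_G)

lemma inv_word_class: "inv\<^bsub>G\<^esub> word_class w = word_class (inv_word w)"
  using pres_eq_inv_word_append[of w]
  by (intro G.inv_equality) (auto simp: carrier_G word_class_mult one_G word_class_eq_iff)

definition c1_el :: "letter list set" where
  "c1_el = q_el \<otimes>\<^bsub>G\<^esub> c_el \<otimes>\<^bsub>G\<^esub> inv\<^bsub>G\<^esub> q_el"

definition c2_el :: "letter list set" where
  "c2_el = (q_el [^]\<^bsub>G\<^esub> (2::nat)) \<otimes>\<^bsub>G\<^esub> c_el \<otimes>\<^bsub>G\<^esub> inv\<^bsub>G\<^esub> (q_el [^]\<^bsub>G\<^esub> (2::nat))"

lemma c_el_carrier [simp]: "c_el \<in> carrier G"
  by (simp add: c_el_def carrier_G)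

lemma q_el_carrier [simp]: "q_el \<in> carrier G"
  by (simp add: q_el_def carrier_G)

lemma c1_el_carrier [simp]: "c1_el \<in> carrier G"
  by (simp add: c1_el_def)

lemma c2_el_conj: "c2_el = q_el \<otimes>\<^bsub>G\<^esub> c1_el \<otimes>\<^bsub>G\<^esub> inv\<^bsub>G\<^esub> q_el"
  by (simp add: c2_el_def c1_el_def numeral_2_eq_2 G.inv_mult_group G.m_assoc)

lemma c2_el_carrier [simp]: "c2_el \<in> carrier G"
  by (simp add: c2_el_conj)

lemma c1_el_word: "c1_el = word_class [(Gq, False), (Gc, False), (Gq, True)]"
  by (simp add: c1_el_def c_el_def q_el_def inv_word_class inv_word_def word_class_mult)

lemma c_c1_commute: "c_el \<otimes>\<^bsub>G\<^esub> c1_el = c1_el \<otimes>\<^bsub>G\<^esub> c_el"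
proof (rule G.commute_if_commutator_eq_one)
  have "word_class relator = \<one>\<^bsub>G\<^esub>"
    using pres_rel[of "[]" "[]"] by (simp add: one_G word_class_eq_iff)
  then show "c_el \<otimes>\<^bsub>G\<^esub> c1_el \<otimes>\<^bsub>G\<^esub> inv\<^bsub>G\<^esub> c_el \<otimes>\<^bsub>G\<^esub> inv\<^bsub>G\<^esub> c1_el = \<one>\<^bsub>G\<^esub>"
    by (simp add: c1_el_word c_el_def inv_word_class inv_word_def word_class_mult relator_def)
qed simp_all

lemma c1_c2_commute: "c1_el \<otimes>\<^bsub>G\<^esub> c2_el = c2_el \<otimes>\<^bsub>G\<^esub> c1_el"
  using arg_cong[OF c_c1_commute, of "\<lambda>x. q_el \<otimes>\<^bsub>G\<^esub> x \<otimes>\<^bsub>G\<^esub> inv\<^bsub>G\<^esub> q_el"]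
  by (simp add: G.conj_mult c2_el_conj c1_el_def[symmetric])

definition base_gen :: "bool \<Rightarrow> letter list set" where
  "base_gen e = (if e then c1_el else c_el)"

definition stable_gen :: "bool \<Rightarrow> letter list set" where
  "stable_gen e = word_class [(Gq, e)]"

lemma base_gen_carrier [simp]: "base_gen e \<in> carrier G"
  by (simp add: base_gen_def)

lemma stable_gen_carrier [simp]: "stable_gen e \<in> carrier G"
  by (simp add: stable_gen_def carrier_G)

lemma stable_gen_eq: "stable_gen e = (if e then inv\<^bsub>G\<^esub> q_el else q_el)"
  by (cases e) (simp_all add: stable_gen_def q_el_def inv_word_class inv_word_def)

lemma base_gen_int_pow_left_commute:
  assumes "z \<in> carrier G"
  shows "base_gen e [^]\<^bsub>G\<^esub> (i::int) \<otimes>\<^bsub>G\<^esub> (base_gen e' [^]\<^bsub>G\<^esub> (j::int) \<otimes>\<^bsub>G\<^esub> z)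
       = base_gen e' [^]\<^bsub>G\<^esub> j \<otimes>\<^bsub>G\<^esub> (base_gen e [^]\<^bsub>G\<^esub> i \<otimes>\<^bsub>G\<^esub> z)"
proof -
  have "base_gen e [^]\<^bsub>G\<^esub> i \<otimes>\<^bsub>G\<^esub> base_gen e' [^]\<^bsub>G\<^esub> j = base_gen e' [^]\<^bsub>G\<^esub> j \<otimes>\<^bsub>G\<^esub> base_gen e [^]\<^bsub>G\<^esub> i"
  proof (cases "e = e'")
    case True
    then show ?thesis
      using G.int_pow_mult[of "base_gen e" i j] G.int_pow_mult[of "base_gen e" j i]
      by (simp add: add.commute)
  next
    case False
    then show ?thesis
      using G.int_pow_commute[OF c_el_carrier c1_el_carrier c_c1_commute]
      by (cases e) (simp_all add: base_gen_def)
  qed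
  then show ?thesis
    using assms by (simp flip: G.m_assoc)
qed

lemma base_gen_int_pow_stable_gen:
  assumes "z \<in> carrier G"
  shows "base_gen (\<not> e) [^]\<^bsub>G\<^esub> (k::int) \<otimes>\<^bsub>G\<^esub> (stable_gen e \<otimes>\<^bsub>G\<^esub> z)
       = stable_gen e \<otimes>\<^bsub>G\<^esub> (base_gen e [^]\<^bsub>G\<^esub> k \<otimes>\<^bsub>G\<^esub> z)"
proof -
  have conj: "q_el \<otimes>\<^bsub>G\<^esub> c_el [^]\<^bsub>G\<^esub> k \<otimes>\<^bsub>G\<^esub> inv\<^bsub>G\<^esub> q_el = c1_el [^]\<^bsub>G\<^esub> k"
    using G.conj_int_pow[of q_el c_el k] by (simp add: c1_el_def)
  have "base_gen (\<not> e) [^]\<^bsub>G\<^esub> k \<otimes>\<^bsub>G\<^esub> stable_gen e = stable_gen e \<otimes>\<^bsub>G\<^esub> base_gen e [^]\<^bsub>G\<^esub> k"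
  proof (cases e)
    case True
    have "inv\<^bsub>G\<^esub> q_el \<otimes>\<^bsub>G\<^esub> c1_el [^]\<^bsub>G\<^esub> k = c_el [^]\<^bsub>G\<^esub> k \<otimes>\<^bsub>G\<^esub> inv\<^bsub>G\<^esub> q_el"
      by (simp add: G.inv_solve_left' conj[symmetric] G.m_assoc)
    then show ?thesis using True by (simp add: base_gen_def stable_gen_eq)
  next
    case False
    have "c1_el [^]\<^bsub>G\<^esub> k \<otimes>\<^bsub>G\<^esub> q_el = q_el \<otimes>\<^bsub>G\<^esub> c_el [^]\<^bsub>G\<^esub> k"
      by (simp add: conj[symmetric] G.m_assoc)
    then show ?thesis using False by (simp add: base_gen_def stable_gen_eq)
  qed
  then show ?thesis
    using assms by (simp flip: G.m_assoc)
qed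

section \<open>Normal forms\<close>

(* Normal forms of G as an HNN extension of <c, c1> = Z^2 with stable letter q, where q c q^-1 = c1.
   In Step m e r the stable letter is q^-1 if e and q otherwise, and it is preceded by a power of
   c resp. c1, i.e. by a coset representative of <c1> resp. <c>. Reducedness forbids q^e directly
   followed by q^-e. *)
datatype nf = Base int int | Step int bool nf

fun nf_eval :: "nf \<Rightarrow> letter list set" where
  "nf_eval (Base a b) = c_el [^]\<^bsub>G\<^esub> a \<otimes>\<^bsub>G\<^esub> c1_el [^]\<^bsub>G\<^esub> b"
| "nf_eval (Step m e r) = base_gen e [^]\<^bsub>G\<^esub> m \<otimes>\<^bsub>G\<^esub> stable_gen e \<otimes>\<^bsub>G\<^esub> nf_eval r"

fun reduced_after :: "bool \<Rightarrow> nf \<Rightarrow> bool" where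
  "reduced_after e (Base a b) = True"
| "reduced_after e (Step m e' r) = (e = e' \<or> m \<noteq> 0)"

fun reduced :: "nf \<Rightarrow> bool" where
  "reduced (Base a b) = True"
| "reduced (Step m e r) = (reduced_after e r \<and> reduced r)"

fun nf_base_mult :: "bool \<Rightarrow> int \<Rightarrow> nf \<Rightarrow> nf" where
  "nf_base_mult e k (Base a b) = (if e then Base a (b + k) else Base (a + k) b)"
| "nf_base_mult e k (Step m e' r) =
     (if e = e' then Step (m + k) e' r else Step m e' (nf_base_mult e' k r))"

fun nf_stable_mult :: "bool \<Rightarrow> nf \<Rightarrow> nf" where
  "nf_stable_mult s (Base a b) = Step 0 s (Base a b)"
| "nf_stable_mult s (Step m e r) = (if e \<noteq> s \<and> m = 0 then r else Step 0 s (Step m e r))"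

fun letter_act :: "letter \<Rightarrow> nf \<Rightarrow> nf" where
  "letter_act (Gc, b) = nf_base_mult False (if b then -1 else 1)"
| "letter_act (Gq, b) = nf_stable_mult b"

definition word_act :: "letter list \<Rightarrow> nf \<Rightarrow> nf" where
  "word_act w = foldr letter_act w"

fun nf_right_mult_c1 :: "nf \<Rightarrow> nf" where
  "nf_right_mult_c1 (Base a b) = Base a (b + 1)"
| "nf_right_mult_c1 (Step m e r) = Step m e (nf_right_mult_c1 r)"

lemma nf_base_mult_add: "nf_base_mult e k (nf_base_mult e l y) = nf_base_mult e (l + k) y"
  by (induction y arbitrary: e) (auto simp: algebra_simps)

lemma nf_base_mult_zero [simp]: "nf_base_mult e 0 y = y"
  by (induction y arbitrary: e) auto

lemma nf_base_mult_commute: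
  "nf_base_mult e k (nf_base_mult (\<not> e) l y) = nf_base_mult (\<not> e) l (nf_base_mult e k y)"
  by (cases y) auto

lemma reduced_after_nf_base_mult [simp]:
  "reduced_after e (nf_base_mult e k r) = reduced_after e r"
  by (cases r) auto

lemma reduced_nf_base_mult: "reduced y \<Longrightarrow> reduced (nf_base_mult e k y)"
  by (induction y arbitrary: e) auto

lemma reduced_nf_stable_mult: "reduced y \<Longrightarrow> reduced (nf_stable_mult s y)"
  by (cases y) auto

lemma nf_stable_mult_reduced_after: "reduced_after s y \<Longrightarrow> nf_stable_mult s y = Step 0 s y"
  by (cases y) auto

lemma nf_stable_mult_inverse: "reduced y \<Longrightarrow> nf_stable_mult s (nf_stable_mult (\<not> s) y) = y"
  by (cases y rule: reduced.cases) (auto simp: nf_stable_mult_reduced_after)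

lemma nf_stable_mult_conj:
  "reduced y \<Longrightarrow> nf_stable_mult (\<not> e) (nf_base_mult (\<not> e) k (nf_stable_mult e y)) = nf_base_mult e k y"
  by (cases y rule: reduced.cases) (auto simp: nf_stable_mult_reduced_after)

lemma reduced_letter_act: "reduced y \<Longrightarrow> reduced (letter_act x y)"
  by (cases x rule: letter_act.cases) (auto simp: reduced_nf_base_mult reduced_nf_stable_mult)

lemma letter_act_inverse: "reduced y \<Longrightarrow> letter_act x (letter_act (inv_letter x) y) = y"
  by (cases x rule: letter_act.cases) (auto simp: nf_base_mult_add nf_stable_mult_inverse)

lemma reduced_word_act: "reduced y \<Longrightarrow> reduced (word_act w y)"
  by (induction w) (auto simp: word_act_def reduced_letter_act)

lemma word_act_append: "word_act (u @ v) y = word_act u (word_act v y)"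
  by (simp add: word_act_def)

lemma word_act_relator: "reduced y \<Longrightarrow> word_act relator y = y"
proof -
  assume y: "reduced y"
  have "word_act relator y
      = nf_base_mult False 1 (nf_stable_mult False (nf_base_mult False 1 (nf_stable_mult True
          (nf_base_mult False (-1) (nf_stable_mult False (nf_base_mult False (-1)
            (nf_stable_mult True y)))))))"
    by (simp add: word_act_def relator_def)
  also have "nf_stable_mult False (nf_base_mult False (-1) (nf_stable_mult True y))
      = nf_base_mult True (-1) y"
    using nf_stable_mult_conj[OF y, of True] by simp
  also have "nf_stable_mult False (nf_base_mult False 1 (nf_stable_mult True
        (nf_base_mult False (-1) (nf_base_mult True (-1) y))))
      = nf_base_mult True 1 (nf_base_mult False (-1) (nf_base_mult True (-1) y))"
    using nf_stable_mult_conj[of _ True] y by (simp add: reduced_nf_base_mult)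
  also have "nf_base_mult False 1 (nf_base_mult True 1 (nf_base_mult False (-1)
        (nf_base_mult True (-1) y))) = y"
    using nf_base_mult_commute[of False 1 1] by (simp add: nf_base_mult_add)
  finally show ?thesis .
qed

lemma word_act_pres_eq: "pres_eq u v \<Longrightarrow> reduced y \<Longrightarrow> word_act u y = word_act v y"
proof (induction u v arbitrary: y rule: pres_eq.induct)
  case (pres_cancel u x v)
  then show ?case
    using letter_act_inverse[of "word_act v y" x] reduced_word_act[of y v]
    by (simp add: word_act_append word_act_def)
next
  case (pres_rel u v)
  then show ?case
    using word_act_relator[of "word_act v y"] reduced_word_act[of y v]
    by (simp add: word_act_append)
qed auto

lemma word_act_right_mult_c1: "word_act w (nf_right_mult_c1 y) = nf_right_mult_c1 (word_act w y)"
proof -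
  have "nf_base_mult e k (nf_right_mult_c1 y) = nf_right_mult_c1 (nf_base_mult e k y)" for e k y
    by (induction y arbitrary: e) auto
  moreover have "nf_stable_mult s (nf_right_mult_c1 y) = nf_right_mult_c1 (nf_stable_mult s y)" for s y
    by (cases y) auto
  ultimately have "letter_act x (nf_right_mult_c1 y) = nf_right_mult_c1 (letter_act x y)" for x y
    by (cases x rule: letter_act.cases) auto
  then show ?thesis
    by (induction w) (auto simp: word_act_def)
qed

lemma nf_eval_carrier [simp]: "nf_eval y \<in> carrier G"
  by (induction y) auto

lemma nf_eval_nf_base_mult:
  "base_gen e [^]\<^bsub>G\<^esub> (k::int) \<otimes>\<^bsub>G\<^esub> nf_eval y = nf_eval (nf_base_mult e k y)"
proof (induction y arbitrary: e)
  case (Base a b)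
  show ?case
  proof (cases e)
    case True
    then show ?thesis
      using base_gen_int_pow_left_commute[of "c1_el [^]\<^bsub>G\<^esub> b" True k False a]
      by (simp add: base_gen_def add.commute flip: G.int_pow_mult)
  next
    case False
    then show ?thesis
      by (simp add: base_gen_def add.commute flip: G.int_pow_mult G.m_assoc)
  qed
next
  case (Step m e' r)
  show ?case
  proof (cases "e = e'")
    case True
    then show ?thesis
      by (simp add: add.commute flip: G.int_pow_mult G.m_assoc)
  next
    case False
    then have e: "e = (\<not> e')" by simp
    have "base_gen e [^]\<^bsub>G\<^esub> k \<otimes>\<^bsub>G\<^esub> nf_eval (Step m e' r)
        = base_gen e' [^]\<^bsub>G\<^esub> m \<otimes>\<^bsub>G\<^esub> (stable_gen e' \<otimes>\<^bsub>G\<^esub> (base_gen e' [^]\<^bsub>G\<^esub> k \<otimes>\<^bsub>G\<^esub> nf_eval r))"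
      by (simp add: e G.m_assoc base_gen_int_pow_left_commute[of _ "\<not> e'"] base_gen_int_pow_stable_gen)
    then show ?thesis
      using e Step.IH by (simp add: G.m_assoc)
  qed
qed

lemma nf_eval_nf_stable_mult: "stable_gen s \<otimes>\<^bsub>G\<^esub> nf_eval y = nf_eval (nf_stable_mult s y)"
proof (cases y)
  case (Step m e r)
  show ?thesis
  proof (cases "e = (\<not> s) \<and> m = 0")
    case True
    have "stable_gen s \<otimes>\<^bsub>G\<^esub> stable_gen (\<not> s) = \<one>\<^bsub>G\<^esub>"
      by (cases s) (simp_all add: stable_gen_eq)
    then show ?thesis
      using Step True by (simp flip: G.m_assoc)
  qed (use Step in \<open>auto simp: G.m_assoc\<close>)
qed simp

lemma nf_eval_letter_act: "word_class [x] \<otimes>\<^bsub>G\<^esub> nf_eval y = nf_eval (letter_act x y)"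
proof (cases x rule: letter_act.cases)
  case (1 b)
  have "word_class [(Gc, b)] = base_gen False [^]\<^bsub>G\<^esub> (if b then -1 else 1 :: int)"
    using inv_word_class[of "[(Gc, False)]"]
    by (simp add: base_gen_def inv_word_def G.int_pow_neg flip: c_el_def)
  then show ?thesis using 1 by (simp add: nf_eval_nf_base_mult)
next
  case (2 b)
  then show ?thesis by (simp flip: stable_gen_def add: nf_eval_nf_stable_mult)
qed

lemma word_class_eq_nf_eval: "word_class w = nf_eval (word_act w (Base 0 0))"
proof (induction w)
  case (Cons x w)
  then show ?case
    using word_class_mult[of "[x]" w] by (simp add: nf_eval_letter_act word_act_def)
qed (simp add: word_act_def flip: one_G)

section \<open>The centraliser of q c q^-1\<close>

definition H :: "letter list set set" where
  "H = generate G {c_el, c1_el, c2_el}"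

lemma subgroup_H: "subgroup H G"
  unfolding H_def by (rule G.generate_is_subgroup) simp

lemma int_pow_generator_in_H: "x \<in> {c_el, c1_el, c2_el} \<Longrightarrow> x [^]\<^bsub>G\<^esub> (k::int) \<in> H"
  using G.subgroup_int_pow_closed[OF subgroup_H] by (auto simp: H_def intro: generate.incl)

lemma mult_in_H: "x \<in> H \<Longrightarrow> y \<in> H \<Longrightarrow> x \<otimes>\<^bsub>G\<^esub> y \<in> H"
  by (rule subgroup.m_closed[OF subgroup_H])

(* The two conjuncts are proved together: peeling c^m q off a normal form commuting with c1 leaves
   one on which c acts from the left as c1 does from the right, and peeling c1^m q^-1 off the
   latter leads back to the first kind. *)
lemma nf_eval_in_H:
  "(nf_base_mult True 1 x = nf_right_mult_c1 x \<longrightarrow> nf_eval x \<in> H)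
   \<and> (nf_base_mult False 1 x = nf_right_mult_c1 x \<longrightarrow> q_el \<otimes>\<^bsub>G\<^esub> nf_eval x \<in> H)"
proof (induction x)
  case (Base a b)
  then show ?case by (auto intro!: mult_in_H int_pow_generator_in_H)
next
  case (Step m e r)
  show ?case
  proof (cases e)
    case True
    have "q_el \<otimes>\<^bsub>G\<^esub> nf_eval (Step m e r) = (q_el \<otimes>\<^bsub>G\<^esub> c1_el [^]\<^bsub>G\<^esub> m \<otimes>\<^bsub>G\<^esub> inv\<^bsub>G\<^esub> q_el) \<otimes>\<^bsub>G\<^esub> nf_eval r"
      using True by (simp add: base_gen_def stable_gen_eq G.m_assoc)
    also have "\<dots> = c2_el [^]\<^bsub>G\<^esub> m \<otimes>\<^bsub>G\<^esub> nf_eval r"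
      by (simp add: G.conj_int_pow c2_el_conj)
    finally show ?thesis using True Step.IH by (auto intro!: mult_in_H int_pow_generator_in_H)
  next
    case False
    have "nf_eval (Step m e r) = c_el [^]\<^bsub>G\<^esub> m \<otimes>\<^bsub>G\<^esub> (q_el \<otimes>\<^bsub>G\<^esub> nf_eval r)"
      using False by (simp add: base_gen_def stable_gen_eq G.m_assoc)
    then show ?thesis using False Step.IH by (auto intro!: mult_in_H int_pow_generator_in_H)
  qed
qed

lemma centraliser_c1_subset_H: "centraliser G c1_el \<subseteq> H"
proof
  fix h assume h: "h \<in> centraliser G c1_el"
  then obtain w where w: "h = word_class w" by (auto simp: centraliser_def carrier_G)
  define x where "x = word_act w (Base 0 0)"
  have x: "reduced x" unfolding x_def by (rule reduced_word_act) simp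
  let ?c1 = "[(Gq, False), (Gc, False), (Gq, True)]"
  have "pres_eq (?c1 @ w) (w @ ?c1)"
    using h by (simp add: centraliser_def w c1_el_word word_class_mult word_class_eq_iff)
  then have "word_act (?c1 @ w) (Base 0 0) = word_act (w @ ?c1) (Base 0 0)"
    by (rule word_act_pres_eq) simp
  moreover have "word_act (?c1 @ w) (Base 0 0) = nf_base_mult True 1 x"
    using nf_stable_mult_conj[OF x, of True 1] by (simp add: word_act_def x_def)
  moreover have "word_act (w @ ?c1) (Base 0 0) = nf_right_mult_c1 x"
    using word_act_right_mult_c1[of w "Base 0 0"] by (simp add: word_act_append word_act_def x_def)
  ultimately have "nf_base_mult True 1 x = nf_right_mult_c1 x" by simp
  then show "h \<in> H"
    using nf_eval_in_H[of x] by (simp add: w word_class_eq_nf_eval x_def)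
qed

lemma H_subset_centraliser_c1: "H \<subseteq> centraliser G c1_el"
  unfolding H_def
proof (rule G.generate_subgroup_incl)
  show "{c_el, c1_el, c2_el} \<subseteq> centraliser G c1_el"
    using c_c1_commute c1_c2_commute by (auto simp: centraliser_def)
qed (simp add: G.subgroup_centraliser)

theorem mainTheorem10:
  shows "centraliser G (q_el \<otimes>\<^bsub>G\<^esub> c_el \<otimes>\<^bsub>G\<^esub> inv\<^bsub>G\<^esub> q_el)
       = generate G {c_el,
                     q_el \<otimes>\<^bsub>G\<^esub> c_el \<otimes>\<^bsub>G\<^esub> inv\<^bsub>G\<^esub> q_el,
                     (q_el [^]\<^bsub>G\<^esub> (2::nat)) \<otimes>\<^bsub>G\<^esub> c_el \<otimes>\<^bsub>G\<^esub> inv\<^bsub>G\<^esub> (q_el [^]\<^bsub>G\<^esub> (2::nat))}"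
proof -
  have "centraliser G c1_el = H"
    using centraliser_c1_subset_H H_subset_centraliser_c1 by (rule equalityI)
  then show ?thesis
    unfolding H_def c1_el_def c2_el_def .
qed

end
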